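(* Let $\mathbb{D}$ be a domain and $\mathbb{D}_1, \ldots, \mathbb{D}_k \subseteq \mathbb{D}$ arbitrary subsets. Let $\mathcal{M} := \{M_i(D \cap \mathbb{D}_i)\}_{1\le i\le k}$ be mechanisms, where $M_i$ also receives the outputs of $M_1,\ldots,M_{i-1}$ and is $f_i$-differentially private (in its data argument, for every value of the previous outputs). Then the composition of $\mathcal{M}$ (the mechanism outputting all the outputs of $M_1,\dots,M_k$ run in sequence) is $f_\gamma$-differentially private, where $$f_\gamma := \mathrm{lce}\left\{ \bigotimes_{i\in I} f_i \;:\; I \subseteq \{1,\ldots,k\},\ \bigcap_{i \in I} \mathbb{D}_i \neq \emptyset \right\}.$$
   Context: An attribute is a finite set; a domain is $\mathbb{D} = A_1 \times \cdots \times A_m$; data sets are elements of $\mathbb{N}^{|\mathbb{D}|}$ (multisets of rows); $D\cap\mathbb{D}'$ denotes the rows of $D$ in $\mathbb{D}'$; neighboring data sets differ in a single row. For distributions $P,P'$, the trade-off function is $T(P,P')(\alpha) := \inf\{\beta_\phi : \alpha_\phi \le \alpha\}$ over measurable rejection rules $0\le\phi\le1$, with $\alpha_\phi = \mathbb{E}_P[\phi]$ and $\beta_\phi = 1-\mathbb{E}_{P'}[\phi]$. A mechanism $M$ is $f$-differentially private if $T(M(D),M(D'))\ge f$ for all neighboring $D,D'$. If $f = T(P_1,P_2)$ and $g = T(P_3,P_4)$, the tensor product is $f\otimes g := T(P_1\times P_3, P_2 \times P_4)$ (well defined and associative, so $n$-fold products make sense). The lower convex envelope of a family $F$ of trade-off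 functions is $\mathrm{lce}\, F (x) := \sup\{ f(x) : f \text{ convex}, f \le \min F\}$. *)

theory Defs
  imports "HOL-Probability.Probability" "HOL-Library.Multiset"
begin

text \<open>Data sets are multisets of rows; rows range over a finite type (the domain).\<close>

definition restrict_ds :: "'r multiset \<Rightarrow> 'r set \<Rightarrow> 'r multiset" where
  "restrict_ds D S = filter_mset (\<lambda>x. x \<in> S) D"

definition neighboring :: "'r multiset \<Rightarrow> 'r multiset \<Rightarrow> bool" where
  "neighboring D D' \<longleftrightarrow> (\<exists>x. D' = D + {#x#}) \<or> (\<exists>x. D = D' + {#x#})"

definition tradeoff :: "'a measure \<Rightarrow> 'a measure \<Rightarrow> real \<Rightarrow> real" where
  "tradeoff P Q \<alpha> = Inf {1 - (\<integral>x. \<phi> x \<partial>Q) | \<phi>.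
      \<phi> \<in> borel_measurable P \<and> (\<forall>x\<in>space P. 0 \<le> \<phi> x \<and> \<phi> x \<le> 1) \<and>
      (\<integral>x. \<phi> x \<partial>P) \<le> \<alpha>}"

definition tradeoff_ge :: "(real \<Rightarrow> real) \<Rightarrow> (real \<Rightarrow> real) \<Rightarrow> bool" where
  "tradeoff_ge f g \<longleftrightarrow> (\<forall>\<alpha>\<in>{0..1}. g \<alpha> \<le> f \<alpha>)"

definition f_DP :: "('r multiset \<Rightarrow> 'a measure) \<Rightarrow> (real \<Rightarrow> real) \<Rightarrow> bool" where
  "f_DP M f \<longleftrightarrow> (\<forall>D D'. neighboring D D' \<longrightarrow> tradeoff_ge (tradeoff (M D) (M D')) f)"

text \<open>Tensor product of the trade-off functions T(P i, Q i), i in I: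
  T(product of P i, product of Q i).\<close>
definition tensor_tradeoff :: "nat set \<Rightarrow> (nat \<Rightarrow> 'p measure) \<Rightarrow> (nat \<Rightarrow> 'p measure) \<Rightarrow> real \<Rightarrow> real" where
  "tensor_tradeoff I P Q = tradeoff (PiM I P) (PiM I Q)"

definition lce :: "(real \<Rightarrow> real) set \<Rightarrow> real \<Rightarrow> real" where
  "lce F x = Sup {g x | g. convex_on {0..1} g \<and> (\<forall>h\<in>F. \<forall>y\<in>{0..1}. g y \<le> h y)}"

text \<open>K i h E is the output distribution of the i-th mechanism given previous outputs h
  (an element of the product of S 0, ..., S (i-1)) and data E; the i-th mechanism is
  fed D restricted to Ds i.\<close>
primrec compose ::
  "(nat \<Rightarrow> (nat \<Rightarrow> 'o) \<Rightarrow> 'r multiset \<Rightarrow> 'o measure) \<Rightarrow> (nat \<Rightarrow> 'o measure) \<Rightarrow>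
   (nat \<Rightarrow> 'r set) \<Rightarrow> nat \<Rightarrow> 'r multiset \<Rightarrow> (nat \<Rightarrow> 'o) measure" where
  "compose K S Ds 0 D = return (PiM {} S) (\<lambda>_. undefined)"
| "compose K S Ds (Suc i) D = bind (compose K S Ds i D)
      (\<lambda>h. distr (K i h (restrict_ds D (Ds i))) (PiM {..<Suc i} S) (\<lambda>y. h(i := y)))"

end

(*
  Let D and D' differ in one row x, and let I be the set of indices i with x in D_i. The
  mechanisms outside I receive identical inputs in both runs, so they act as a common
  post-processing, which cannot decrease a trade-off function. Each mechanism in I is an
  adaptive step whose kernels are uniformly f_i-private; by induction over the steps the
  composition is bounded below by the tensor product of the f_i, i in I. The inductive step
  rests on splitting a test on the joint output into tests on its sections: choosing
  near-optimal tests measurably in their level shows that if T(X, Y) >= f and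
  T(L h, L' h) >= g for every h, then the trade-off function of the two-stage experiments
  X >>= L versus Y >>= L' is at least the tensor product of f and g.
  Finally x lies in the intersection of the D_i, i in I, so this tensor product belongs to
  the family, and the lower convex envelope lies below every member of the family.
*)

theory Submission
  imports Defs
begin

definition is_test :: "'a measure \<Rightarrow> ('a \<Rightarrow> real) \<Rightarrow> bool" where
  "is_test M \<phi> \<longleftrightarrow> \<phi> \<in> borel_measurable M \<and> (\<forall>x\<in>space M. 0 \<le> \<phi> x \<and> \<phi> x \<le> 1)"

lemma is_test_cong_sets: "sets M = sets N \<Longrightarrow> is_test M \<phi> = is_test N \<phi>"
  unfolding is_test_def using sets_eq_imp_space_eq[of M N] measurable_cong_sets[of M N borel borel]
  by auto

lemma is_test_one_minus: "is_test M \<phi> \<Longrightarrow> is_test M (\<lambda>x. 1 - \<phi> x)"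
  unfolding is_test_def by (auto intro!: borel_measurable_diff)

lemma is_test_const: "0 \<le> c \<Longrightarrow> c \<le> 1 \<Longrightarrow> is_test M (\<lambda>_. c)"
  by (simp add: is_test_def)

lemma integrable_test: "prob_space M \<Longrightarrow> is_test M \<phi> \<Longrightarrow> integrable M \<phi>"
  unfolding is_test_def
  by (intro finite_measure.integrable_const_bound[where B=1]) (auto simp: prob_space.finite_measure)

lemma integral_const_minus:
  fixes f :: "'a \<Rightarrow> real"
  assumes M: "prob_space M" and f: "integrable M f"
  shows "(\<integral>x. c - f x \<partial>M) = c - (\<integral>x. f x \<partial>M)"
proof -
  have "(\<integral>x. c - f x \<partial>M) = (\<integral>x. c \<partial>M) - (\<integral>x. f x \<partial>M)"
    by (rule Bochner_Integration.integral_diff[OF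
          finite_measure.integrable_const[OF prob_space.finite_measure[OF M]] f])
  then show ?thesis using M by (simp add: prob_space.prob_space)
qed

lemma integral_test_bounds:
  assumes "prob_space M" "is_test M \<phi>"
  shows "0 \<le> (\<integral>x. \<phi> x \<partial>M)" "(\<integral>x. \<phi> x \<partial>M) \<le> 1"
proof -
  interpret prob_space M by fact
  show "0 \<le> (\<integral>x. \<phi> x \<partial>M)"
    using assms(2) unfolding is_test_def by (auto intro!: integral_nonneg)
  have "(\<integral>x. \<phi> x \<partial>M) \<le> (\<integral>x. 1 \<partial>M)"
    using assms(2) integrable_test[OF assms] unfolding is_test_def by (intro integral_mono) auto
  then show "(\<integral>x. \<phi> x \<partial>M) \<le> 1" by (simp add: prob_space)
qed

lemma tradeoff_ge_trans [trans]: "tradeoff_ge f g \<Longrightarrow> tradeoff_ge g h \<Longrightarrow> tradeoff_ge f h"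
  unfolding tradeoff_ge_def by force

lemma tradeoff_eq_Inf_tests:
  "tradeoff P Q \<alpha> = Inf {1 - (\<integral>x. \<phi> x \<partial>Q) | \<phi>. is_test P \<phi> \<and> (\<integral>x. \<phi> x \<partial>P) \<le> \<alpha>}"
  unfolding tradeoff_def is_test_def by simp

lemma tradeoff_le_test:
  assumes "prob_space Q" "sets Q = sets P" "is_test P \<phi>" "(\<integral>x. \<phi> x \<partial>P) \<le> \<alpha>"
  shows "tradeoff P Q \<alpha> \<le> 1 - (\<integral>x. \<phi> x \<partial>Q)"
  unfolding tradeoff_eq_Inf_tests
proof (rule cInf_lower)
  show "bdd_below {1 - (\<integral>x. \<phi> x \<partial>Q) | \<phi>. is_test P \<phi> \<and> (\<integral>x. \<phi> x \<partial>P) \<le> \<alpha>}"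
    using integral_test_bounds(2)[OF assms(1)] is_test_cong_sets[OF assms(2)]
    unfolding bdd_below_def by (intro exI[of _ 0]) force
qed (use assms in auto)

lemma tradeoff_geI:
  assumes "0 \<le> \<alpha>"
    and "\<And>\<phi>. is_test P \<phi> \<Longrightarrow> (\<integral>x. \<phi> x \<partial>P) \<le> \<alpha> \<Longrightarrow> c \<le> 1 - (\<integral>x. \<phi> x \<partial>Q)"
  shows "c \<le> tradeoff P Q \<alpha>"
  unfolding tradeoff_eq_Inf_tests
proof (rule cInf_greatest)
  show "{1 - (\<integral>x. \<phi> x \<partial>Q) | \<phi>. is_test P \<phi> \<and> (\<integral>x. \<phi> x \<partial>P) \<le> \<alpha>} \<noteq> {}"
    using assms(1) is_test_const[of 0 P] by auto
qed (use assms(2) in auto)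

lemma tradeoff_antimono:
  assumes "prob_space Q" "sets Q = sets P" "0 \<le> \<alpha>" "\<alpha> \<le> \<beta>"
  shows "tradeoff P Q \<beta> \<le> tradeoff P Q \<alpha>"
  using assms by (intro tradeoff_geI tradeoff_le_test) auto

lemma tradeoff_nonneg:
  assumes "prob_space Q" "sets Q = sets P" "0 \<le> \<alpha>"
  shows "0 \<le> tradeoff P Q \<alpha>"
proof (rule tradeoff_geI[OF assms(3)])
  fix \<phi> assume "is_test P \<phi>"
  then show "0 \<le> 1 - (\<integral>x. \<phi> x \<partial>Q)"
    using integral_test_bounds(2)[OF assms(1)] is_test_cong_sets[OF assms(2)] by simp
qed

lemma tradeoff_le_one_minus:
  assumes "prob_space P" "prob_space Q" "sets Q = sets P" "\<alpha> \<in> {0..1}"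
  shows "tradeoff P Q \<alpha> \<le> 1 - \<alpha>"
  using tradeoff_le_test[OF assms(2,3) is_test_const, of \<alpha>] assms
  by (simp add: prob_space.prob_space)

lemma one_minus_le_tradeoff_self:
  assumes "0 \<le> \<alpha>"
  shows "1 - \<alpha> \<le> tradeoff P P \<alpha>"
  using assms by (intro tradeoff_geI) auto

lemma tradeoff_ge_same:
  assumes "prob_space P" "prob_space Q" "sets Q = sets P"
  shows "tradeoff_ge (tradeoff M M) (tradeoff P Q)"
  using tradeoff_le_one_minus[OF assms] one_minus_le_tradeoff_self
  by (fastforce simp: tradeoff_ge_def intro: order_trans)

lemma tradeoff_near_optimal_test:
  assumes "0 \<le> \<alpha>" "\<epsilon> > 0"
  obtains \<phi> where "is_test P \<phi>" "(\<integral>x. \<phi> x \<partial>P) \<le> \<alpha>" "1 - (\<integral>x. \<phi> x \<partial>Q) < tradeoff P Q \<alpha> + \<epsilon>"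
proof -
  let ?T = "{1 - (\<integral>x. \<phi> x \<partial>Q) | \<phi>. is_test P \<phi> \<and> (\<integral>x. \<phi> x \<partial>P) \<le> \<alpha>}"
  have nonempty: "?T \<noteq> {}" using assms(1) is_test_const[of 0 P] by auto
  have "Inf ?T < tradeoff P Q \<alpha> + \<epsilon>" using assms(2) unfolding tradeoff_eq_Inf_tests by simp
  from cInf_lessD[OF nonempty this] obtain \<phi> where
    "is_test P \<phi>" "(\<integral>x. \<phi> x \<partial>P) \<le> \<alpha>" "1 - (\<integral>x. \<phi> x \<partial>Q) < tradeoff P Q \<alpha> + \<epsilon>"
    by blast
  then show ?thesis by (rule that)
qed

lemma tradeoff_near_optimal_test_seq:
  assumes "\<And>m. 0 \<le> \<alpha> m" "\<epsilon> > 0"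
  obtains \<phi> where "\<And>m. is_test P (\<phi> m)" "\<And>m. (\<integral>x. \<phi> m x \<partial>P) \<le> \<alpha> m"
    "\<And>m. 1 - (\<integral>x. \<phi> m x \<partial>Q) < tradeoff P Q (\<alpha> m) + \<epsilon>"
proof -
  have "\<forall>m. \<exists>\<phi>. is_test P \<phi> \<and> (\<integral>x. \<phi> x \<partial>P) \<le> \<alpha> m \<and> 1 - (\<integral>x. \<phi> x \<partial>Q) < tradeoff P Q (\<alpha> m) + \<epsilon>"
  proof
    fix m
    show "\<exists>\<phi>. is_test P \<phi> \<and> (\<integral>x. \<phi> x \<partial>P) \<le> \<alpha> m \<and> 1 - (\<integral>x. \<phi> x \<partial>Q) < tradeoff P Q (\<alpha> m) + \<epsilon>"
      by (rule tradeoff_near_optimal_test[OF assms]) blast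
  qed
  then show ?thesis using that by metis
qed

lemma prob_algebra_kernelD:
  assumes "K \<in> M \<rightarrow>\<^sub>M prob_algebra T" "h \<in> space M"
  shows "prob_space (K h)" "sets (K h) = sets T"
  using measurable_space[OF assms] by (simp_all add: space_prob_algebra)

lemma is_test_kernel_integral:
  assumes L: "L \<in> M \<rightarrow>\<^sub>M prob_algebra T" and \<phi>: "is_test T \<phi>"
  shows "is_test M (\<lambda>h. \<integral>x. \<phi> x \<partial>L h)"
  unfolding is_test_def
proof
  have "\<phi> \<in> borel_measurable T" using \<phi> by (simp add: is_test_def)
  then show "(\<lambda>h. \<integral>x. \<phi> x \<partial>L h) \<in> borel_measurable M"
    using measurable_comp[OF measurable_prob_algebraD[OF L] integral_measurable_subprob_algebra]
    by (simp add: comp_def)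
  show "\<forall>h\<in>space M. 0 \<le> (\<integral>x. \<phi> x \<partial>L h) \<and> (\<integral>x. \<phi> x \<partial>L h) \<le> 1"
  proof
    fix h assume "h \<in> space M"
    then show "0 \<le> (\<integral>x. \<phi> x \<partial>L h) \<and> (\<integral>x. \<phi> x \<partial>L h) \<le> 1"
      using integral_test_bounds prob_algebra_kernelD[OF L] is_test_cong_sets \<phi> by metis
  qed
qed

lemma integral_bind_test:
  assumes X: "X \<in> space (prob_algebra M)" and L: "L \<in> M \<rightarrow>\<^sub>M prob_algebra T"
    and \<phi>: "is_test T \<phi>"
  shows "(\<integral>x. \<phi> x \<partial>(X \<bind> L)) = (\<integral>h. (\<integral>x. \<phi> x \<partial>L h) \<partial>X)"
proof (rule integral_bind[where B=1 and B'=1])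
  have sets_X: "sets X = sets M" using X by (simp add: space_prob_algebra)
  show "L \<in> X \<rightarrow>\<^sub>M subprob_algebra T"
    using measurable_prob_algebraD[OF L] by (simp add: measurable_cong_sets[OF sets_X refl])
  show "finite_measure X" using X by (simp add: space_prob_algebra prob_space.finite_measure)
  show "AE h in X. emeasure (L h) (space (L h)) \<le> ennreal 1"
    using measurable_space[OF L] sets_eq_imp_space_eq[OF sets_X]
    by (intro AE_I2) (auto simp: space_prob_algebra prob_space.emeasure_space_1)
qed (use \<phi> in \<open>auto simp: is_test_def\<close>)

lemma tradeoff_ge_bind:
  assumes X: "X \<in> space (prob_algebra M)" and Y: "Y \<in> space (prob_algebra M)"
    and L: "L \<in> M \<rightarrow>\<^sub>M prob_algebra T"
  shows "tradeoff_ge (tradeoff (X \<bind> L) (Y \<bind> L)) (tradeoff X Y)"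
  unfolding tradeoff_ge_def
proof
  fix \<alpha> :: real assume "\<alpha> \<in> {0..1}"
  then show "tradeoff X Y \<alpha> \<le> tradeoff (X \<bind> L) (Y \<bind> L) \<alpha>"
  proof (intro tradeoff_geI)
    fix \<phi> assume \<phi>: "is_test (X \<bind> L) \<phi>" and level: "(\<integral>x. \<phi> x \<partial>(X \<bind> L)) \<le> \<alpha>"
    have "is_test T \<phi>" using \<phi> is_test_cong_sets[OF sets_bind'[OF X L]] by simp
    have "sets X = sets M" using X by (simp add: space_prob_algebra)
    then have "is_test X (\<lambda>h. \<integral>x. \<phi> x \<partial>L h)"
      using is_test_kernel_integral[OF L \<open>is_test T \<phi>\<close>] is_test_cong_sets by blast
    then have "tradeoff X Y \<alpha> \<le> 1 - (\<integral>h. (\<integral>x. \<phi> x \<partial>L h) \<partial>Y)"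
      using X Y level integral_bind_test[OF X L \<open>is_test T \<phi>\<close>]
      by (intro tradeoff_le_test) (auto simp: space_prob_algebra)
    then show "tradeoff X Y \<alpha> \<le> 1 - (\<integral>x. \<phi> x \<partial>(Y \<bind> L))"
      using integral_bind_test[OF Y L \<open>is_test T \<phi>\<close>] by simp
  qed auto
qed

lemma tradeoff_ge_distr:
  assumes X: "prob_space X" and Y: "prob_space Y" and sets_Y: "sets Y = sets X"
    and f: "f \<in> X \<rightarrow>\<^sub>M N"
  shows "tradeoff_ge (tradeoff (distr X N f) (distr Y N f)) (tradeoff X Y)"
proof -
  have f': "f \<in> Y \<rightarrow>\<^sub>M N" using f by (simp add: measurable_cong_sets[OF sets_Y refl])
  have "distr X N f = X \<bind> (\<lambda>x. return N (f x))" "distr Y N f = Y \<bind> (\<lambda>x. return N (f x))"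
    using bind_return_distr' f f' X Y prob_space.not_empty by metis+
  moreover have "tradeoff_ge (tradeoff (X \<bind> (\<lambda>x. return N (f x))) (Y \<bind> (\<lambda>x. return N (f x))))
      (tradeoff X Y)"
    using X Y sets_Y
    by (intro tradeoff_ge_bind[where M=X and T=N] measurable_compose[OF f measurable_return_prob_space])
      (auto simp: space_prob_algebra)
  ultimately show ?thesis by simp
qed

lemma power_inverse_floor_log_bounds:
  fixes c a :: real
  assumes c: "c > 1" and a: "0 < a" "a \<le> 1"
  shows "a \<le> (1/c) ^ nat \<lfloor>log c (1/a)\<rfloor>" "(1/c) ^ nat \<lfloor>log c (1/a)\<rfloor> \<le> c * a"
proof -
  define L where "L = log c (1/a)"
  define m where "m = nat \<lfloor>L\<rfloor>"
  have "0 \<le> L" unfolding L_def using c a by simp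
  then have m: "real m \<le> L" "L < real m + 1" unfolding m_def by linarith+
  have c_powr_L: "c powr L = 1/a" unfolding L_def using c a by simp
  have "c ^ m = c powr real m" using c by (simp add: powr_realpow)
  also have "\<dots> \<le> c powr L" using m c by (intro powr_mono) auto
  finally have upper: "c ^ m \<le> 1/a" using c_powr_L by simp
  have "1/a < c powr (real m + 1)" using c_powr_L m c by (metis powr_less_mono)
  also have "\<dots> = c * c ^ m" using c by (simp add: powr_realpow[symmetric] powr_add)
  finally have lower: "1/a < c * c ^ m" .
  have "0 < c ^ m" using c by simp
  then show "a \<le> (1/c) ^ nat \<lfloor>log c (1/a)\<rfloor>" "(1/c) ^ nat \<lfloor>log c (1/a)\<rfloor> \<le> c * a"
    using upper lower a c unfolding m_def L_def by (simp_all add: power_one_over field_simps)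
qed

lemma geometric_grid:
  fixes c :: real
  assumes c: "c > 1"
  obtains idx :: "real \<Rightarrow> nat" and lev :: "nat \<Rightarrow> real"
  where "idx \<in> borel \<rightarrow>\<^sub>M count_space UNIV" and "\<And>m. 0 \<le> lev m"
    and "\<And>t. t \<in> {0..1} \<Longrightarrow> t \<le> lev (idx t) \<and> lev (idx t) \<le> c * t"
proof -
  define lev where "lev m = (if m = 0 then 0 else (1/c) ^ (m - 1))" for m :: nat
  define idx where "idx t = (if t \<le> 0 then 0 else Suc (nat \<lfloor>log c (1/t)\<rfloor>))" for t :: real
  have "idx \<in> borel \<rightarrow>\<^sub>M count_space UNIV" unfolding idx_def by measurable
  moreover have "0 \<le> lev m" for m using c by (simp add: lev_def)
  moreover have "t \<le> lev (idx t) \<and> lev (idx t) \<le> c * t" if "t \<in> {0..1}" for t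
  proof (cases "t = 0")
    case False
    then have "lev (idx t) = (1/c) ^ nat \<lfloor>log c (1/t)\<rfloor>" using that by (simp add: idx_def lev_def)
    then show ?thesis using power_inverse_floor_log_bounds[OF c, of t] that False by simp
  qed (simp add: idx_def lev_def)
  ultimately show ?thesis by (rule that)
qed

text \<open>Near-optimal tests are chosen only on the countable grid of levels \<open>(1/c)\<^sup>m\<close> and scaled
  down by \<open>1/c\<close>; this keeps the level below \<open>t\<close> and makes the family measurable in \<open>t\<close>.\<close>

lemma near_optimal_test_family:
  assumes Q: "prob_space Q" and sets_Q: "sets Q = sets P" and "\<epsilon> > 0"
  obtains \<psi> where "(\<lambda>p. \<psi> (fst p) (snd p)) \<in> borel_measurable (borel \<Otimes>\<^sub>M P)"
    and "\<And>t. t \<in> {0..1} \<Longrightarrow> is_test P (\<psi> t)"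
    and "\<And>t. t \<in> {0..1} \<Longrightarrow> (\<integral>z. \<psi> t z \<partial>P) \<le> t"
    and "\<And>t. t \<in> {0..1} \<Longrightarrow> 1 - (\<integral>z. \<psi> t z \<partial>Q) \<le> tradeoff P Q t + \<epsilon>"
proof -
  define c where "c = 1 + \<epsilon>/2"
  have c: "c > 1" using \<open>\<epsilon> > 0\<close> by (simp add: c_def)
  obtain idx :: "real \<Rightarrow> nat" and lev :: "nat \<Rightarrow> real"
    where [measurable]: "idx \<in> borel \<rightarrow>\<^sub>M count_space UNIV"
    and lev_nonneg: "\<And>m. 0 \<le> lev m"
    and lev_idx: "\<And>t. t \<in> {0..1} \<Longrightarrow> t \<le> lev (idx t) \<and> lev (idx t) \<le> c * t"
    using geometric_grid[OF c] by metis
  obtain \<phi> where \<phi>: "\<And>m. is_test P (\<phi> m)" "\<And>m. (\<integral>z. \<phi> m z \<partial>P) \<le> lev m"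
    "\<And>m. 1 - (\<integral>z. \<phi> m z \<partial>Q) < tradeoff P Q (lev m) + \<epsilon>/2"
    by (rule tradeoff_near_optimal_test_seq[where \<alpha>=lev and P=P and Q=Q and \<epsilon>="\<epsilon>/2", OF lev_nonneg])
      (use \<open>\<epsilon> > 0\<close> in \<open>simp_all, blast\<close>)
  define \<psi> where "\<psi> = (\<lambda>t z. \<phi> (idx t) z / c)"
  show ?thesis
  proof
    have [measurable]: "\<phi> m \<in> borel_measurable P" for m using \<phi>(1) by (simp add: is_test_def)
    show "(\<lambda>p. \<psi> (fst p) (snd p)) \<in> borel_measurable (borel \<Otimes>\<^sub>M P)"
      unfolding \<psi>_def
    proof (rule measurable_compose_countable'[where f="\<lambda>m p. \<phi> m (snd p) / c" and I=UNIV])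
      show "(\<lambda>p. \<phi> m (snd p) / c) \<in> borel_measurable (borel \<Otimes>\<^sub>M P)" for m
        by measurable
      show "(\<lambda>p. idx (fst p)) \<in> borel \<Otimes>\<^sub>M P \<rightarrow>\<^sub>M count_space UNIV"
        by measurable
    qed simp
  next
    fix t :: real assume t: "t \<in> {0..1}"
    show "is_test P (\<psi> t)"
      using \<phi>(1)[of "idx t"] c by (auto simp: is_test_def \<psi>_def)
    have "(\<integral>z. \<psi> t z \<partial>P) = (\<integral>z. \<phi> (idx t) z \<partial>P) / c" by (simp add: \<psi>_def)
    also have "\<dots> \<le> lev (idx t) / c" using \<phi>(2) c by (simp add: divide_right_mono)
    also have "\<dots> \<le> t" using lev_idx[OF t] c by (simp add: divide_le_eq mult.commute)
    finally show "(\<integral>z. \<psi> t z \<partial>P) \<le> t" .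
    define T where "T = tradeoff P Q t"
    have "tradeoff P Q (lev (idx t)) \<le> T"
      unfolding T_def using lev_idx[OF t] t by (intro tradeoff_antimono Q sets_Q) auto
    then have power: "1 - T - \<epsilon>/2 < (\<integral>z. \<phi> (idx t) z \<partial>Q)" using \<phi>(3)[of "idx t"] by simp
    have "0 \<le> T" unfolding T_def using t by (intro tradeoff_nonneg Q sets_Q) auto
    have "(1 - T - \<epsilon>) * c = 1 - T - \<epsilon>/2 - (T * \<epsilon> + \<epsilon> * \<epsilon>) / 2"
      by (simp add: c_def field_simps)
    also have "\<dots> \<le> 1 - T - \<epsilon>/2" using \<open>0 \<le> T\<close> \<open>\<epsilon> > 0\<close> by simp
    finally have "(1 - T - \<epsilon>) * c \<le> (\<integral>z. \<phi> (idx t) z \<partial>Q)" using power by linarith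
    then show "1 - (\<integral>z. \<psi> t z \<partial>Q) \<le> T + \<epsilon>"
      using c by (simp add: \<psi>_def field_simps)
  qed
qed

lemma is_test_Pair1:
  "is_test (M \<Otimes>\<^sub>M N) \<psi> \<Longrightarrow> x \<in> space M \<Longrightarrow> is_test N (\<lambda>y. \<psi> (x, y))"
  using measurable_Pair1'[of x M N] by (auto simp: is_test_def space_pair_measure)

lemma is_test_integral_snd:
  assumes N: "prob_space N" and \<psi>: "is_test (M \<Otimes>\<^sub>M N) \<psi>"
  shows "is_test M (\<lambda>x. \<integral>y. \<psi> (x, y) \<partial>N)"
proof -
  interpret N: prob_space N by fact
  have "\<psi> \<in> borel_measurable (M \<Otimes>\<^sub>M N)" using \<psi> by (simp add: is_test_def)
  then have "(\<lambda>x. \<integral>y. \<psi> (x, y) \<partial>N) \<in> borel_measurable M"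
    by (intro N.borel_measurable_lebesgue_integral) simp
  then show ?thesis
    using integral_test_bounds[OF N is_test_Pair1[OF \<psi>]] by (simp add: is_test_def)
qed

lemma integral_pair_test:
  assumes M: "prob_space M" and N: "prob_space N" and \<psi>: "is_test (M \<Otimes>\<^sub>M N) \<psi>"
  shows "(\<integral>p. \<psi> p \<partial>(M \<Otimes>\<^sub>M N)) = (\<integral>x. (\<integral>y. \<psi> (x, y) \<partial>N) \<partial>M)"
proof -
  interpret M: prob_space M by fact
  interpret N: prob_space N by fact
  interpret pair_sigma_finite M N by unfold_locales
  show ?thesis using integral_fst'[OF integrable_test[OF prob_space_pair[OF M N] \<psi>]] by simp
qed

lemma is_test_pair_family:
  assumes a: "is_test X a" and \<psi>_meas: "(\<lambda>p. \<psi> (fst p) (snd p)) \<in> borel_measurable (borel \<Otimes>\<^sub>M P)"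
    and \<psi>: "\<And>t. t \<in> {0..1} \<Longrightarrow> is_test P (\<psi> t)"
  shows "is_test (X \<Otimes>\<^sub>M P) (\<lambda>p. \<psi> (a (fst p)) (snd p))"
proof -
  have [measurable]: "a \<in> borel_measurable X" using a by (simp add: is_test_def)
  have "(\<lambda>p. (a (fst p), snd p)) \<in> X \<Otimes>\<^sub>M P \<rightarrow>\<^sub>M borel \<Otimes>\<^sub>M P" by measurable
  from measurable_comp[OF this \<psi>_meas]
  have "(\<lambda>p. \<psi> (a (fst p)) (snd p)) \<in> borel_measurable (X \<Otimes>\<^sub>M P)" by (simp add: comp_def)
  then show ?thesis using a \<psi> by (auto simp: is_test_def space_pair_measure)
qed

lemma tradeoff_pair_le_integral:
  assumes X: "prob_space X" and Y: "prob_space Y" and sets_Y: "sets Y = sets X"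
    and P: "prob_space P" and Q: "prob_space Q" and sets_Q: "sets Q = sets P"
    and a: "is_test X a" and b: "is_test X b"
    and ab: "\<And>h. h \<in> space X \<Longrightarrow> tradeoff P Q (a h) \<le> b h"
    and level: "(\<integral>h. a h \<partial>X) \<le> \<alpha>"
  shows "tradeoff (X \<Otimes>\<^sub>M P) (Y \<Otimes>\<^sub>M Q) \<alpha> \<le> (\<integral>h. b h \<partial>Y)"
proof (rule field_le_epsilon)
  fix \<epsilon> :: real assume "0 < \<epsilon>"
  obtain \<psi> where \<psi>_meas: "(\<lambda>p. \<psi> (fst p) (snd p)) \<in> borel_measurable (borel \<Otimes>\<^sub>M P)"
    and \<psi>_test: "\<And>t. t \<in> {0..1} \<Longrightarrow> is_test P (\<psi> t)"
    and \<psi>_level: "\<And>t. t \<in> {0..1} \<Longrightarrow> (\<integral>z. \<psi> t z \<partial>P) \<le> t"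
    and \<psi>_power: "\<And>t. t \<in> {0..1} \<Longrightarrow> 1 - (\<integral>z. \<psi> t z \<partial>Q) \<le> tradeoff P Q t + \<epsilon>"
    using near_optimal_test_family[OF Q sets_Q \<open>0 < \<epsilon>\<close>] by blast
  have a01: "a h \<in> {0..1}" if "h \<in> space X" for h using a that by (simp add: is_test_def)
  define \<Psi> where "\<Psi> = (\<lambda>p. \<psi> (a (fst p)) (snd p))"
  have \<Psi>: "is_test (X \<Otimes>\<^sub>M P) \<Psi>" unfolding \<Psi>_def using a \<psi>_meas \<psi>_test by (rule is_test_pair_family)
  have "(\<integral>p. \<Psi> p \<partial>(X \<Otimes>\<^sub>M P)) = (\<integral>h. (\<integral>z. \<psi> (a h) z \<partial>P) \<partial>X)"
    using integral_pair_test[OF X P \<Psi>] by (simp add: \<Psi>_def)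
  also have "\<dots> \<le> (\<integral>h. a h \<partial>X)"
    using is_test_integral_snd[OF P \<Psi>] \<psi>_level a01
    by (intro integral_mono integrable_test[OF X] a) (auto simp: \<Psi>_def)
  finally have \<Psi>_level: "(\<integral>p. \<Psi> p \<partial>(X \<Otimes>\<^sub>M P)) \<le> \<alpha>" using level by linarith
  have sets_YQ: "sets (Y \<Otimes>\<^sub>M Q) = sets (X \<Otimes>\<^sub>M P)"
    using sets_Y sets_Q by (intro sets_pair_measure_cong)
  then have \<Psi>': "is_test (Y \<Otimes>\<^sub>M Q) \<Psi>" using \<Psi> is_test_cong_sets by blast
  have b': "is_test Y b" using b is_test_cong_sets[OF sets_Y] by simp
  have \<Psi>'_section: "is_test Y (\<lambda>h. \<integral>z. \<psi> (a h) z \<partial>Q)"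
    using is_test_integral_snd[OF Q \<Psi>'] by (simp add: \<Psi>_def)
  have "(\<integral>h. (1 - \<epsilon>) - b h \<partial>Y) \<le> (\<integral>h. (\<integral>z. \<psi> (a h) z \<partial>Q) \<partial>Y)"
  proof (rule integral_mono)
    show "integrable Y (\<lambda>h. (1 - \<epsilon>) - b h)"
      using finite_measure.integrable_const[OF prob_space.finite_measure[OF Y]] integrable_test[OF Y b']
      by (rule Bochner_Integration.integrable_diff)
    show "integrable Y (\<lambda>h. \<integral>z. \<psi> (a h) z \<partial>Q)" using integrable_test[OF Y \<Psi>'_section] .
    fix h assume "h \<in> space Y"
    then have "h \<in> space X" using sets_eq_imp_space_eq[OF sets_Y] by simp
    then show "(1 - \<epsilon>) - b h \<le> (\<integral>z. \<psi> (a h) z \<partial>Q)"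
      using \<psi>_power[OF a01] ab by fastforce
  qed
  then have "1 - (\<integral>p. \<Psi> p \<partial>(Y \<Otimes>\<^sub>M Q)) \<le> (\<integral>h. b h \<partial>Y) + \<epsilon>"
    using integral_pair_test[OF Y Q \<Psi>'] integral_const_minus[OF Y integrable_test[OF Y b']]
    by (simp add: \<Psi>_def)
  then show "tradeoff (X \<Otimes>\<^sub>M P) (Y \<Otimes>\<^sub>M Q) \<alpha> \<le> (\<integral>h. b h \<partial>Y) + \<epsilon>"
    using tradeoff_le_test[OF prob_space_pair[OF Y Q] sets_YQ \<Psi> \<Psi>_level] by linarith
qed

lemma tradeoff_ge_pair_right:
  assumes M: "prob_space M" and N: "prob_space N" and sets_N: "sets N = sets M"
    and P: "prob_space P" and Q: "prob_space Q" and sets_Q: "sets Q = sets P"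
    and X: "prob_space X" and Y: "prob_space Y" and sets_Y: "sets Y = sets X"
    and XY: "tradeoff_ge (tradeoff X Y) (tradeoff P Q)"
  shows "tradeoff_ge (tradeoff (M \<Otimes>\<^sub>M X) (N \<Otimes>\<^sub>M Y)) (tradeoff (M \<Otimes>\<^sub>M P) (N \<Otimes>\<^sub>M Q))"
  unfolding tradeoff_ge_def
proof
  fix \<alpha> :: real assume "\<alpha> \<in> {0..1}"
  show "tradeoff (M \<Otimes>\<^sub>M P) (N \<Otimes>\<^sub>M Q) \<alpha> \<le> tradeoff (M \<Otimes>\<^sub>M X) (N \<Otimes>\<^sub>M Y) \<alpha>"
  proof (rule field_le_epsilon)
    fix \<epsilon> :: real assume "0 < \<epsilon>"
    obtain \<psi> where \<psi>: "is_test (M \<Otimes>\<^sub>M X) \<psi>" and level: "(\<integral>p. \<psi> p \<partial>(M \<Otimes>\<^sub>M X)) \<le> \<alpha>"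
      and power: "1 - (\<integral>p. \<psi> p \<partial>(N \<Otimes>\<^sub>M Y)) < tradeoff (M \<Otimes>\<^sub>M X) (N \<Otimes>\<^sub>M Y) \<alpha> + \<epsilon>"
      using tradeoff_near_optimal_test \<open>\<alpha> \<in> {0..1}\<close> \<open>0 < \<epsilon>\<close> by (metis atLeastAtMost_iff)
    have "sets (N \<Otimes>\<^sub>M Y) = sets (M \<Otimes>\<^sub>M X)" using sets_N sets_Y by (rule sets_pair_measure_cong)
    then have \<psi>': "is_test (N \<Otimes>\<^sub>M Y) \<psi>" using \<psi> is_test_cong_sets by blast
    define a where "a = (\<lambda>h. \<integral>x. \<psi> (h, x) \<partial>X)"
    define b where "b = (\<lambda>h. 1 - (\<integral>y. \<psi> (h, y) \<partial>Y))"
    have a: "is_test M a" unfolding a_def by (rule is_test_integral_snd[OF X \<psi>])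
    have b: "is_test M b"
      using is_test_one_minus[OF is_test_integral_snd[OF Y \<psi>']] is_test_cong_sets[OF sets_N]
      by (simp add: b_def)
    have "tradeoff P Q (a h) \<le> b h" if "h \<in> space M" for h
    proof -
      have "a h \<in> {0..1}" using a that by (simp add: is_test_def)
      then have "tradeoff P Q (a h) \<le> tradeoff X Y (a h)" using XY by (simp add: tradeoff_ge_def)
      also have "\<dots> \<le> b h"
        unfolding b_def a_def using is_test_Pair1[OF \<psi> that] by (intro tradeoff_le_test Y sets_Y) auto
      finally show ?thesis .
    qed
    moreover have "(\<integral>h. a h \<partial>M) \<le> \<alpha>" using integral_pair_test[OF M X \<psi>] level by (simp add: a_def)
    ultimately have "tradeoff (M \<Otimes>\<^sub>M P) (N \<Otimes>\<^sub>M Q) \<alpha> \<le> (\<integral>h. b h \<partial>N)"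
      by (rule tradeoff_pair_le_integral[OF M N sets_N P Q sets_Q a b])
    also have "\<dots> = 1 - (\<integral>p. \<psi> p \<partial>(N \<Otimes>\<^sub>M Y))"
      using integral_const_minus[OF N integrable_test[OF N is_test_integral_snd[OF Y \<psi>']]]
        integral_pair_test[OF N Y \<psi>'] by (simp add: b_def)
    finally show "tradeoff (M \<Otimes>\<^sub>M P) (N \<Otimes>\<^sub>M Q) \<alpha> \<le> tradeoff (M \<Otimes>\<^sub>M X) (N \<Otimes>\<^sub>M Y) \<alpha> + \<epsilon>"
      using power by linarith
  qed
qed

lemma tradeoff_ge_pair_swap:
  assumes M1: "prob_space M1" and M2: "prob_space M2" and N1: "prob_space N1" and N2: "prob_space N2"
    and sets_N1: "sets N1 = sets M1" and sets_N2: "sets N2 = sets M2"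
  shows "tradeoff_ge (tradeoff (M1 \<Otimes>\<^sub>M M2) (N1 \<Otimes>\<^sub>M N2)) (tradeoff (M2 \<Otimes>\<^sub>M M1) (N2 \<Otimes>\<^sub>M N1))"
proof -
  have swap: "A \<Otimes>\<^sub>M B = distr (B \<Otimes>\<^sub>M A) (M1 \<Otimes>\<^sub>M M2) (\<lambda>(x, y). (y, x))"
    if "prob_space A" "prob_space B" "sets (A \<Otimes>\<^sub>M B) = sets (M1 \<Otimes>\<^sub>M M2)" for A B :: "_ measure"
  proof -
    interpret A: prob_space A by fact
    interpret B: prob_space B by fact
    interpret pair_sigma_finite A B by unfold_locales
    show ?thesis by (subst distr_pair_swap) (intro distr_cong refl that(3))
  qed
  have "sets (N1 \<Otimes>\<^sub>M N2) = sets (M1 \<Otimes>\<^sub>M M2)" "sets (N2 \<Otimes>\<^sub>M N1) = sets (M2 \<Otimes>\<^sub>M M1)"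
    using sets_N1 sets_N2 by (auto intro: sets_pair_measure_cong)
  then show ?thesis
    using swap[OF M1 M2] swap[OF N1 N2] M1 M2 N1 N2
    by (metis tradeoff_ge_distr prob_space_pair measurable_pair_swap')
qed

lemma tradeoff_ge_bind_pair:
  assumes X: "X \<in> space (prob_algebra M)" and Y: "Y \<in> space (prob_algebra M)"
    and L: "L \<in> M \<rightarrow>\<^sub>M prob_algebra T" and L': "L' \<in> M \<rightarrow>\<^sub>M prob_algebra T"
    and P: "prob_space P" and Q: "prob_space Q" and sets_Q: "sets Q = sets P"
    and LP: "\<And>h. h \<in> space M \<Longrightarrow> tradeoff_ge (tradeoff (L h) (L' h)) (tradeoff P Q)"
  shows "tradeoff_ge (tradeoff (X \<bind> L) (Y \<bind> L')) (tradeoff (X \<Otimes>\<^sub>M P) (Y \<Otimes>\<^sub>M Q))"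
  unfolding tradeoff_ge_def
proof
  fix \<alpha> :: real assume "\<alpha> \<in> {0..1}"
  have sets_X: "sets X = sets M" and sets_Y: "sets Y = sets M" and "prob_space X" "prob_space Y"
    using X Y by (auto simp: space_prob_algebra)
  show "tradeoff (X \<Otimes>\<^sub>M P) (Y \<Otimes>\<^sub>M Q) \<alpha> \<le> tradeoff (X \<bind> L) (Y \<bind> L') \<alpha>"
  proof (rule tradeoff_geI)
    fix \<phi> assume "is_test (X \<bind> L) \<phi>" and level: "(\<integral>x. \<phi> x \<partial>(X \<bind> L)) \<le> \<alpha>"
    then have \<phi>: "is_test T \<phi>" using is_test_cong_sets[OF sets_bind'[OF X L]] by simp
    define a where "a = (\<lambda>h. \<integral>x. \<phi> x \<partial>L h)"
    define b where "b = (\<lambda>h. 1 - (\<integral>x. \<phi> x \<partial>L' h))"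
    have a: "is_test X a"
      using is_test_kernel_integral[OF L \<phi>] is_test_cong_sets[OF sets_X] by (simp add: a_def)
    have b: "is_test X b"
      using is_test_one_minus[OF is_test_kernel_integral[OF L' \<phi>]] is_test_cong_sets[OF sets_X]
      by (simp add: b_def)
    have "tradeoff P Q (a h) \<le> b h" if "h \<in> space X" for h
    proof -
      have h: "h \<in> space M" using that sets_eq_imp_space_eq[OF sets_X] by simp
      have "a h \<in> {0..1}" using a that by (simp add: is_test_def)
      then have "tradeoff P Q (a h) \<le> tradeoff (L h) (L' h) (a h)"
        using LP[OF h] by (simp add: tradeoff_ge_def)
      also have "\<dots> \<le> b h"
        unfolding a_def b_def
        using prob_algebra_kernelD[OF L h] prob_algebra_kernelD[OF L' h] \<phi> is_test_cong_sets
        by (metis order.refl tradeoff_le_test)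
      finally show ?thesis .
    qed
    moreover have "(\<integral>h. a h \<partial>X) \<le> \<alpha>" using level integral_bind_test[OF X L \<phi>] by (simp add: a_def)
    ultimately have "tradeoff (X \<Otimes>\<^sub>M P) (Y \<Otimes>\<^sub>M Q) \<alpha> \<le> (\<integral>h. b h \<partial>Y)"
      using sets_X sets_Y \<open>prob_space X\<close> \<open>prob_space Y\<close>
      by (intro tradeoff_pair_le_integral[OF _ _ _ P Q sets_Q a b]) auto
    also have "\<dots> = 1 - (\<integral>x. \<phi> x \<partial>(Y \<bind> L'))"
      using integral_bind_test[OF Y L' \<phi>] integral_const_minus[OF \<open>prob_space Y\<close>]
        integrable_test[OF \<open>prob_space Y\<close>] is_test_kernel_integral[OF L' \<phi>] is_test_cong_sets[OF sets_Y]
      by (simp add: b_def)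
    finally show "tradeoff (X \<Otimes>\<^sub>M P) (Y \<Otimes>\<^sub>M Q) \<alpha> \<le> 1 - (\<integral>x. \<phi> x \<partial>(Y \<bind> L'))" .
  qed (use \<open>\<alpha> \<in> {0..1}\<close> in simp)
qed

lemma distr_PiM_insert_eq_pair:
  assumes j: "j \<notin> J" and M: "\<And>i. i \<in> insert j J \<Longrightarrow> prob_space (M i)"
  shows "distr (PiM (insert j J) M) (M j \<Otimes>\<^sub>M PiM J M) (\<lambda>\<omega>. (\<omega> j, restrict \<omega> J)) = M j \<Otimes>\<^sub>M PiM J M"
    (is "distr _ ?pair ?split = _")
proof -
  have split: "?split \<in> PiM (insert j J) M \<rightarrow>\<^sub>M ?pair"
    by (intro measurable_Pair measurable_component_singleton measurable_restrict_subset) auto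
  have join: "(\<lambda>(x, X). X(j := x)) \<in> ?pair \<rightarrow>\<^sub>M PiM (insert j J) M"
    using measurable_pair_swap_iff[THEN iffD1, OF measurable_add_dim[of j J M]] by simp
  have "distr (PiM (insert j J) M) ?pair ?split
      = distr (distr ?pair (PiM (insert j J) M) (\<lambda>(x, X). X(j := x))) ?pair ?split"
    using distr_pair_PiM_eq_PiM[of J M j] M by simp
  also have "\<dots> = distr ?pair ?pair (\<lambda>p. ?split (case p of (x, X) \<Rightarrow> X(j := x)))"
    by (rule distr_distr[OF split join, unfolded comp_def])
  also have "\<dots> = distr ?pair ?pair (\<lambda>p. p)"
  proof (rule distr_cong[OF refl refl])
    fix p assume "p \<in> space ?pair"
    then obtain x X where "p = (x, X)" "X \<in> space (PiM J M)" by (auto simp: space_pair_measure)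
    with j show "?split (case p of (x, X) \<Rightarrow> X(j := x)) = p"
      by (auto simp: space_PiM PiE_def extensional_def restrict_def fun_eq_iff)
  qed
  finally show ?thesis by simp
qed

lemma tradeoff_ge_PiM_insert:
  assumes j: "j \<notin> J"
    and PQ: "\<And>i. i \<in> insert j J \<Longrightarrow> prob_space (P i) \<and> prob_space (Q i) \<and> sets (P i) = sets (Q i)"
  shows "tradeoff_ge (tradeoff (P j \<Otimes>\<^sub>M PiM J P) (Q j \<Otimes>\<^sub>M PiM J Q))
      (tradeoff (PiM (insert j J) P) (PiM (insert j J) Q))"
proof -
  let ?split = "\<lambda>\<omega>. (\<omega> j, restrict \<omega> J)"
  have sets_Q: "sets (PiM (insert j J) Q) = sets (PiM (insert j J) P)"
    using PQ by (intro sets_PiM_cong) auto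
  have "sets (P j \<Otimes>\<^sub>M PiM J P) = sets (Q j \<Otimes>\<^sub>M PiM J Q)"
    using PQ by (intro sets_pair_measure_cong sets_PiM_cong) auto
  then have "distr (PiM (insert j J) Q) (P j \<Otimes>\<^sub>M PiM J P) ?split
      = distr (PiM (insert j J) Q) (Q j \<Otimes>\<^sub>M PiM J Q) ?split"
    by (intro distr_cong) auto
  also have "\<dots> = Q j \<Otimes>\<^sub>M PiM J Q" using distr_PiM_insert_eq_pair[OF j, of Q] PQ by auto
  finally have Q_eq: "distr (PiM (insert j J) Q) (P j \<Otimes>\<^sub>M PiM J P) ?split = Q j \<Otimes>\<^sub>M PiM J Q" .
  have P_eq: "distr (PiM (insert j J) P) (P j \<Otimes>\<^sub>M PiM J P) ?split = P j \<Otimes>\<^sub>M PiM J P"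
    using distr_PiM_insert_eq_pair[OF j, of P] PQ by auto
  have "?split \<in> PiM (insert j J) P \<rightarrow>\<^sub>M P j \<Otimes>\<^sub>M PiM J P"
    by (intro measurable_Pair measurable_component_singleton measurable_restrict_subset) auto
  then have "tradeoff_ge
      (tradeoff (distr (PiM (insert j J) P) (P j \<Otimes>\<^sub>M PiM J P) ?split)
        (distr (PiM (insert j J) Q) (P j \<Otimes>\<^sub>M PiM J P) ?split))
      (tradeoff (PiM (insert j J) P) (PiM (insert j J) Q))"
    using PQ by (intro tradeoff_ge_distr prob_space_PiM sets_Q) auto
  then show ?thesis by (simp only: P_eq Q_eq)
qed

lemma tradeoff_ge_bind_PiM_insert:
  assumes C: "C \<in> space (prob_algebra M)" "C' \<in> space (prob_algebra M)"
    and L: "L \<in> M \<rightarrow>\<^sub>M prob_algebra T" "L' \<in> M \<rightarrow>\<^sub>M prob_algebra T"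
    and j: "j \<notin> J"
    and PQ: "\<And>i. i \<in> insert j J \<Longrightarrow> prob_space (P i) \<and> prob_space (Q i) \<and> sets (P i) = sets (Q i)"
    and CJ: "tradeoff_ge (tradeoff C C') (tradeoff (PiM J P) (PiM J Q))"
    and LP: "\<And>h. h \<in> space M \<Longrightarrow> tradeoff_ge (tradeoff (L h) (L' h)) (tradeoff (P j) (Q j))"
  shows "tradeoff_ge (tradeoff (C \<bind> L) (C' \<bind> L')) (tradeoff (PiM (insert j J) P) (PiM (insert j J) Q))"
proof -
  have Pj: "prob_space (P j)" "prob_space (Q j)" "sets (Q j) = sets (P j)" using PQ by auto
  have PJ: "prob_space (PiM J P)" "prob_space (PiM J Q)" "sets (PiM J Q) = sets (PiM J P)"
    using PQ by (auto intro!: prob_space_PiM sets_PiM_cong)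
  have C': "prob_space C" "prob_space C'" "sets C' = sets C" using C by (auto simp: space_prob_algebra)
  have "tradeoff_ge (tradeoff (C \<bind> L) (C' \<bind> L')) (tradeoff (C \<Otimes>\<^sub>M P j) (C' \<Otimes>\<^sub>M Q j))"
    using Pj LP by (intro tradeoff_ge_bind_pair[OF C L]) auto
  also have "tradeoff_ge \<dots> (tradeoff (P j \<Otimes>\<^sub>M C) (Q j \<Otimes>\<^sub>M C'))"
    using C' Pj by (intro tradeoff_ge_pair_swap) auto
  also have "tradeoff_ge \<dots> (tradeoff (P j \<Otimes>\<^sub>M PiM J P) (Q j \<Otimes>\<^sub>M PiM J Q))"
    by (rule tradeoff_ge_pair_right[OF Pj PJ C' CJ])
  also have "tradeoff_ge \<dots> (tradeoff (PiM (insert j J) P) (PiM (insert j J) Q))"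
    by (rule tradeoff_ge_PiM_insert[OF j PQ])
  finally show ?thesis .
qed

lemma tradeoff_ge_distr_fun_upd:
  assumes h: "h \<in> space (PiM {..<n} S)"
    and \<kappa>: "\<kappa> \<in> space (prob_algebra (S n))" "\<kappa>' \<in> space (prob_algebra (S n))"
  shows "tradeoff_ge
      (tradeoff (distr \<kappa> (PiM {..<Suc n} S) (\<lambda>y. h(n := y))) (distr \<kappa>' (PiM {..<Suc n} S) (\<lambda>y. h(n := y))))
      (tradeoff \<kappa> \<kappa>')"
proof (rule tradeoff_ge_distr)
  show "prob_space \<kappa>" "prob_space \<kappa>'" "sets \<kappa>' = sets \<kappa>" using \<kappa> by (simp_all add: space_prob_algebra)
  have "sets \<kappa> = sets (S n)" using \<kappa> by (simp add: space_prob_algebra)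
  moreover have "(\<lambda>y. h(n := y)) \<in> S n \<rightarrow>\<^sub>M PiM {..<Suc n} S"
    using measurable_component_update[OF h, of n] by (simp add: lessThan_Suc)
  ultimately show "(\<lambda>y. h(n := y)) \<in> \<kappa> \<rightarrow>\<^sub>M PiM {..<Suc n} S"
    using measurable_cong_sets by blast
qed

lemma measurable_distr_fun_upd_kernel:
  assumes "\<kappa> \<in> PiM {..<n} S \<rightarrow>\<^sub>M prob_algebra (S n)"
  shows "(\<lambda>h. distr (\<kappa> h) (PiM {..<Suc n} S) (\<lambda>y. h(n := y)))
      \<in> PiM {..<n} S \<rightarrow>\<^sub>M prob_algebra (PiM {..<Suc n} S)"
proof (rule measurable_distr_prob_space2[OF assms])
  show "(\<lambda>(h, y). h(n := y)) \<in> PiM {..<n} S \<Otimes>\<^sub>M S n \<rightarrow>\<^sub>M PiM {..<Suc n} S"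
    using measurable_add_dim[of n "{..<n}" S] by (simp add: lessThan_Suc)
qed

lemma compose_in_prob_algebra:
  assumes "\<And>i E. i < n \<Longrightarrow> (\<lambda>h. K i h E) \<in> PiM {..<i} S \<rightarrow>\<^sub>M prob_algebra (S i)"
  shows "compose K S Ds n D \<in> space (prob_algebra (PiM {..<n} S))"
  using assms
proof (induction n)
  case 0
  have "(\<lambda>_. undefined) \<in> space (PiM {} S)" by (simp add: PiM_empty)
  then show ?case by (auto simp: space_prob_algebra prob_space_return)
next
  case (Suc n)
  let ?L = "\<lambda>h. distr (K n h (restrict_ds D (Ds n))) (PiM {..<Suc n} S) (\<lambda>y. h(n := y))"
  have C: "compose K S Ds n D \<in> space (prob_algebra (PiM {..<n} S))" using Suc by simp
  have L: "?L \<in> PiM {..<n} S \<rightarrow>\<^sub>M prob_algebra (PiM {..<Suc n} S)"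
    using Suc.prems by (intro measurable_distr_fun_upd_kernel) simp
  show ?case using prob_space_bind'[OF C L] sets_bind'[OF C L] by (simp add: space_prob_algebra)
qed

lemma tradeoff_ge_compose:
  assumes "\<And>i E. i < n \<Longrightarrow> (\<lambda>h. K i h E) \<in> PiM {..<i} S \<rightarrow>\<^sub>M prob_algebra (S i)"
    and "\<And>i. i < n \<Longrightarrow> prob_space (P i) \<and> prob_space (Q i) \<and> sets (P i) = sets (Q i)"
    and "\<And>i. i < n \<Longrightarrow> i \<notin> I \<Longrightarrow> restrict_ds D (Ds i) = restrict_ds D' (Ds i)"
    and "\<And>i h. i < n \<Longrightarrow> i \<in> I \<Longrightarrow> h \<in> space (PiM {..<i} S) \<Longrightarrow>
      tradeoff_ge (tradeoff (K i h (restrict_ds D (Ds i))) (K i h (restrict_ds D' (Ds i))))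
        (tradeoff (P i) (Q i))"
  shows "tradeoff_ge (tradeoff (compose K S Ds n D) (compose K S Ds n D'))
      (tradeoff (PiM (I \<inter> {..<n}) P) (PiM (I \<inter> {..<n}) Q))"
  using assms
proof (induction n)
  case 0
  have "prob_space (PiM {} P)" by (rule prob_space_PiM) simp
  moreover have "PiM {} Q = PiM {} P" by (simp add: PiM_empty)
  ultimately show ?case by (simp add: tradeoff_ge_same)
next
  case (Suc n)
  define C where "C = compose K S Ds n D"
  define C' where "C' = compose K S Ds n D'"
  define J where "J = I \<inter> {..<n}"
  define L where "L = (\<lambda>E h. distr (K n h E) (PiM {..<Suc n} S) (\<lambda>y. h(n := y)))"
  let ?E = "restrict_ds D (Ds n)" and ?E' = "restrict_ds D' (Ds n)"
  have compose_Suc: "compose K S Ds (Suc n) D = C \<bind> L ?E" "compose K S Ds (Suc n) D' = C' \<bind> L ?E'"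
    by (simp_all add: C_def C'_def L_def)
  have IH: "tradeoff_ge (tradeoff C C') (tradeoff (PiM J P) (PiM J Q))"
    unfolding C_def C'_def J_def using Suc by simp
  have C: "C \<in> space (prob_algebra (PiM {..<n} S))" "C' \<in> space (prob_algebra (PiM {..<n} S))"
    unfolding C_def C'_def using Suc.prems(1) by (simp_all add: compose_in_prob_algebra)
  have L: "L E \<in> PiM {..<n} S \<rightarrow>\<^sub>M prob_algebra (PiM {..<Suc n} S)" for E
    unfolding L_def using Suc.prems(1) by (intro measurable_distr_fun_upd_kernel) simp
  show ?case
  proof (cases "n \<in> I")
    case False
    then have "I \<inter> {..<Suc n} = J" "?E' = ?E" using Suc.prems(3) by (auto simp: J_def less_Suc_eq)
    have "tradeoff_ge (tradeoff (C \<bind> L ?E) (C' \<bind> L ?E)) (tradeoff C C')"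
      by (rule tradeoff_ge_bind[OF C L])
    also note IH
    finally show ?thesis by (simp only: compose_Suc \<open>?E' = ?E\<close> \<open>I \<inter> {..<Suc n} = J\<close>)
  next
    case True
    have "tradeoff_ge (tradeoff (L ?E h) (L ?E' h)) (tradeoff (P n) (Q n))"
      if "h \<in> space (PiM {..<n} S)" for h
    proof -
      have "K n h E \<in> space (prob_algebra (S n))" for E
        using measurable_space[OF Suc.prems(1)[of n E] that] by simp
      then have "tradeoff_ge (tradeoff (L ?E h) (L ?E' h)) (tradeoff (K n h ?E) (K n h ?E'))"
        unfolding L_def by (intro tradeoff_ge_distr_fun_upd that)
      also have "tradeoff_ge \<dots> (tradeoff (P n) (Q n))" using Suc.prems(4)[OF _ True that] by simp
      finally show ?thesis .
    qed
    then have "tradeoff_ge (tradeoff (C \<bind> L ?E) (C' \<bind> L ?E'))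
        (tradeoff (PiM (insert n J) P) (PiM (insert n J) Q))"
      using Suc.prems(2) by (intro tradeoff_ge_bind_PiM_insert[OF C L L _ _ IH]) (auto simp: J_def)
    also have "insert n J = I \<inter> {..<Suc n}" using True by (auto simp: J_def less_Suc_eq)
    finally show ?thesis by (simp only: compose_Suc)
  qed
qed

lemma lce_le:
  assumes "g \<in> F" "x \<in> {0..1}" and nonneg: "\<And>f y. f \<in> F \<Longrightarrow> y \<in> {0..1} \<Longrightarrow> 0 \<le> f y"
  shows "lce F x \<le> g x"
  unfolding lce_def
proof (rule cSup_least)
  have "convex_on {0..1::real} (\<lambda>_. 0::real)" by (simp add: convex_on_const convex_real_interval)
  then show "{h x | h. convex_on {0..1} h \<and> (\<forall>f\<in>F. \<forall>y\<in>{0..1}. h y \<le> f y)} \<noteq> {}"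
    using nonneg by blast
qed (use assms(1,2) in blast)

lemma restrict_ds_add_row:
  assumes "D' = D + {#x#} \<or> D = D' + {#x#}"
  shows "x \<in> A \<Longrightarrow> neighboring (restrict_ds D A) (restrict_ds D' A)"
    and "x \<notin> A \<Longrightarrow> restrict_ds D A = restrict_ds D' A"
  using assms by (auto simp: restrict_ds_def neighboring_def)

theorem theorem6:
  fixes k :: nat
    and Ds :: "nat \<Rightarrow> ('r::finite) set"
    and S :: "nat \<Rightarrow> 'o measure"
    and K :: "nat \<Rightarrow> (nat \<Rightarrow> 'o) \<Rightarrow> 'r multiset \<Rightarrow> 'o measure"
    and P Q :: "nat \<Rightarrow> 'p measure"
  assumes kernel: "\<And>i E. i < k \<Longrightarrow>
      (\<lambda>h. K i h E) \<in> measurable (PiM {..<i} S) (prob_algebra (S i))"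
    and rep: "\<And>i. i < k \<Longrightarrow> prob_space (P i) \<and> prob_space (Q i) \<and> sets (P i) = sets (Q i)"
    and dp: "\<And>i h. i < k \<Longrightarrow> h \<in> space (PiM {..<i} S) \<Longrightarrow>
      f_DP (\<lambda>E. K i h E) (tradeoff (P i) (Q i))"
  shows "f_DP (compose K S Ds k)
      (lce {tensor_tradeoff I P Q | I. I \<subseteq> {..<k} \<and> (\<Inter>i\<in>I. Ds i) \<noteq> {}})"
  unfolding f_DP_def
proof (intro allI impI)
  fix D D' :: "'r multiset" assume "neighboring D D'"
  then obtain x where x: "D' = D + {#x#} \<or> D = D' + {#x#}" unfolding neighboring_def by blast
  define I where "I = {i. i < k \<and> x \<in> Ds i}"
  let ?F = "{tensor_tradeoff I P Q | I. I \<subseteq> {..<k} \<and> (\<Inter>i\<in>I. Ds i) \<noteq> {}}"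
  have same: "restrict_ds D (Ds i) = restrict_ds D' (Ds i)" if "i < k" "i \<notin> I" for i
    using restrict_ds_add_row(2)[OF x] that by (simp add: I_def)
  have dp_I: "tradeoff_ge (tradeoff (K i h (restrict_ds D (Ds i))) (K i h (restrict_ds D' (Ds i))))
      (tradeoff (P i) (Q i))" if "i < k" "i \<in> I" "h \<in> space (PiM {..<i} S)" for i h
    using dp[OF that(1,3)] restrict_ds_add_row(1)[OF x] that(2) unfolding f_DP_def I_def by simp
  have "tradeoff_ge (tradeoff (compose K S Ds k D) (compose K S Ds k D'))
      (tradeoff (PiM (I \<inter> {..<k}) P) (PiM (I \<inter> {..<k}) Q))"
    using kernel rep same dp_I by (rule tradeoff_ge_compose)
  also have "I \<inter> {..<k} = I" by (auto simp: I_def)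
  also have "tradeoff_ge (tradeoff (PiM I P) (PiM I Q)) (lce ?F)"
    unfolding tradeoff_ge_def
  proof
    fix \<alpha> :: real assume "\<alpha> \<in> {0..1}"
    have nonneg: "0 \<le> f y" if "f \<in> ?F" "y \<in> {0..1}" for f y
    proof -
      from that(1) obtain J where J: "f = tensor_tradeoff J P Q" "J \<subseteq> {..<k}" by blast
      then have "prob_space (PiM J Q)" "sets (PiM J Q) = sets (PiM J P)"
        using rep by (auto intro!: prob_space_PiM sets_PiM_cong)
      then show ?thesis using that(2) J(1) by (simp add: tensor_tradeoff_def tradeoff_nonneg)
    qed
    have "tensor_tradeoff I P Q \<in> ?F" by (auto simp: I_def)
    then have "lce ?F \<alpha> \<le> tensor_tradeoff I P Q \<alpha>"
      using \<open>\<alpha> \<in> {0..1}\<close> nonneg by (rule lce_le)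
    then show "lce ?F \<alpha> \<le> tradeoff (PiM I P) (PiM I Q) \<alpha>" by (simp add: tensor_tradeoff_def)
  qed
  finally show "tradeoff_ge (tradeoff (compose K S Ds k D) (compose K S Ds k D')) (lce ?F)" .
qed

end
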